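(* Let $\mathbf{F}_{\Phi}$ be a fence over the Cantor space $X$, let $H_X:X\to X$ be a continuous surjection and let $T:\mathbf{F}_\Phi\to\mathbf{F}_\Phi$ be a continuous lifting of $H_X$ such that for every $x\in X$ the restriction of $T$ to the fiber $\{x\}\times\mathbf{F}_\Phi(x)$ is a homeomorphism (onto its image). Then the topological entropies satisfy $\mathrm{ent}(T)=\mathrm{ent}(H_X)$.
   Context: For $\Phi=(\varphi^L,\varphi^U)$ with $\varphi^L,\varphi^U:X\to[0,1]$, $\varphi^L$ lower semicontinuous, $\varphi^U$ upper semicontinuous, $\varphi^L\le\varphi^U$, the fence is $\mathbf{F}_\Phi=\{(x,t)\in X\times[0,1]:\varphi^L(x)\le t\le\varphi^U(x)\}$ and $\mathbf{F}_\Phi(x)=\{t:(x,t)\in\mathbf{F}_\Phi\}$. A map $T:\mathbf{F}_\Phi\to\mathbf{F}_\Phi$ is a lifting of $H_X:X\to X$ if $T(x,t)=(H_X(x),s)$ for some $s\in\mathbf{F}_\Phi(H_X(x))$, for every $(x,t)\in\mathbf{F}_\Phi$. *)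

theory Defs
  imports "HOL-Analysis.Analysis"
begin

definition cantor_space :: "(nat \<Rightarrow> bool) topology" where
  "cantor_space = product_topology (\<lambda>_. discrete_topology (UNIV :: bool set)) UNIV"

definition lsc_on :: "'a topology \<Rightarrow> ('a \<Rightarrow> real) \<Rightarrow> bool" where
  "lsc_on X f \<longleftrightarrow> (\<forall>a. openin X {x \<in> topspace X. f x > a})"

definition usc_on :: "'a topology \<Rightarrow> ('a \<Rightarrow> real) \<Rightarrow> bool" where
  "usc_on X f \<longleftrightarrow> (\<forall>a. openin X {x \<in> topspace X. f x < a})"

definition fence :: "'a topology \<Rightarrow> ('a \<Rightarrow> real) \<Rightarrow> ('a \<Rightarrow> real) \<Rightarrow> ('a \<times> real) set" where
  "fence X phiL phiU = {(x, t). x \<in> topspace X \<and> t \<in> {0..1} \<and> phiL x \<le> t \<and> t \<le> phiU x}"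

definition fence_fiber :: "'a topology \<Rightarrow> ('a \<Rightarrow> real) \<Rightarrow> ('a \<Rightarrow> real) \<Rightarrow> 'a \<Rightarrow> real set" where
  "fence_fiber X phiL phiU x = {t. (x, t) \<in> fence X phiL phiU}"

definition fence_topology :: "'a topology \<Rightarrow> ('a \<Rightarrow> real) \<Rightarrow> ('a \<Rightarrow> real) \<Rightarrow> ('a \<times> real) topology" where
  "fence_topology X phiL phiU = subtopology (prod_topology X euclideanreal) (fence X phiL phiU)"

definition is_fence_data :: "'a topology \<Rightarrow> ('a \<Rightarrow> real) \<Rightarrow> ('a \<Rightarrow> real) \<Rightarrow> bool" where
  "is_fence_data X phiL phiU \<longleftrightarrow>
     (\<forall>x \<in> topspace X. 0 \<le> phiL x \<and> phiL x \<le> phiU x \<and> phiU x \<le> 1) \<and>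
     lsc_on X phiL \<and> usc_on X phiU"

definition is_lifting :: "'a topology \<Rightarrow> ('a \<Rightarrow> real) \<Rightarrow> ('a \<Rightarrow> real) \<Rightarrow>
     ('a \<Rightarrow> 'a) \<Rightarrow> ('a \<times> real \<Rightarrow> 'a \<times> real) \<Rightarrow> bool" where
  "is_lifting X phiL phiU H T \<longleftrightarrow>
     (\<forall>(x, t) \<in> fence X phiL phiU.
        \<exists>s \<in> fence_fiber X phiL phiU (H x). T (x, t) = (H x, s))"

definition open_cover :: "'a topology \<Rightarrow> 'a set set \<Rightarrow> bool" where
  "open_cover Y U \<longleftrightarrow> (\<forall>A \<in> U. openin Y A) \<and> topspace Y \<subseteq> \<Union>U"

definition min_subcover_card :: "'a topology \<Rightarrow> 'a set set \<Rightarrow> nat" where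
  "min_subcover_card Y U = (LEAST n. \<exists>V \<subseteq> U. finite V \<and> card V = n \<and> topspace Y \<subseteq> \<Union>V)"

definition join_cover :: "'a topology \<Rightarrow> ('a \<Rightarrow> 'a) \<Rightarrow> 'a set set \<Rightarrow> nat \<Rightarrow> 'a set set" where
  "join_cover Y f U n =
     {{y \<in> topspace Y. \<forall>i<n. (f ^^ i) y \<in> A i} | A. \<forall>i<n. A i \<in> U}"

definition cover_entropy :: "'a topology \<Rightarrow> ('a \<Rightarrow> 'a) \<Rightarrow> 'a set set \<Rightarrow> ereal" where
  "cover_entropy Y f U =
     limsup (\<lambda>n. ereal (ln (real (min_subcover_card Y (join_cover Y f U (Suc n)))) / real (Suc n)))"

definition topological_entropy :: "'a topology \<Rightarrow> ('a \<Rightarrow> 'a) \<Rightarrow> ereal" where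
  "topological_entropy Y f = (SUP U \<in> {U. open_cover Y U}. cover_entropy Y f U)"

end

theory Submission
  imports Defs "HOL-Real_Asymp.Real_Asymp"
begin

(* The projection fst from the fence onto X semiconjugates T to H and is onto, so pulling
   open covers of X back to the fence gives ent(H) <= ent(T).

   Conversely, fix an open cover W of the fence and a vertical Lebesgue number delta of W.
   Since T^i is continuous and injective on each fibre interval, t |-> snd (T^i (x, t)) is
   monotone there, so the codes (floor (snd (T^i (x, t)) / delta))_{i<m} take at most mK + 1
   values on a fibre, where K = ceiling (1 / delta).  Hence the orbit segments of length m
   starting in a fibre are followed by at most mK + 1 tuples of members of W, and by compactness
   the same tuples serve a neighbourhood of the base point.  Cutting orbit segments of length n
   into blocks of length m along a minimal subcover of the n-th join for H gives
   N(W^n) <= N(U^n) (mK + 1)^(n/m + 1), hence ent(T) <= ent(H) + ln (mK + 1) / m for every m,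
   and the last term tends to 0. *)

section \<open>Joins of open covers\<close>

lemma continuous_map_funpow:
  assumes "continuous_map Z Z f"
  shows "continuous_map Z Z (f ^^ n)"
proof (induction n)
  case (Suc n)
  then show ?case
    using continuous_map_compose[OF Suc.IH assms] by (simp add: comp_def)
qed simp

lemma funpow_in_topspace:
  assumes "continuous_map Z Z f" and "y \<in> topspace Z"
  shows "(f ^^ n) y \<in> topspace Z"
  using continuous_map_image_subset_topspace[OF continuous_map_funpow[OF assms(1)]] assms(2) by blast

lemma openin_orbit_preimage:
  assumes "continuous_map Z Z f" and "\<And>i. i < n \<Longrightarrow> openin Z (A i)"
  shows "openin Z {y \<in> topspace Z. \<forall>i<n. (f ^^ i) y \<in> A i}"
  using assms(2)
proof (induction n)
  case (Suc n)
  have "{y \<in> topspace Z. \<forall>i<Suc n. (f ^^ i) y \<in> A i}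
      = {y \<in> topspace Z. \<forall>i<n. (f ^^ i) y \<in> A i} \<inter> {y \<in> topspace Z. (f ^^ n) y \<in> A n}"
    by (auto simp: less_Suc_eq)
  moreover have "openin Z {y \<in> topspace Z. (f ^^ n) y \<in> A n}"
    using Suc.prems by (intro openin_continuous_map_preimage[OF continuous_map_funpow[OF assms(1)]]) simp
  ultimately show ?case
    using Suc by (simp add: openin_Int)
qed simp

lemma open_cover_join_cover:
  assumes "open_cover Z U" and "continuous_map Z Z f"
  shows "open_cover Z (join_cover Z f U n)"
  unfolding open_cover_def
proof (intro conjI ballI subsetI)
  fix E assume "E \<in> join_cover Z f U n"
  then obtain A where E: "E = {y \<in> topspace Z. \<forall>i<n. (f ^^ i) y \<in> A i}" and A: "\<forall>i<n. A i \<in> U"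
    unfolding join_cover_def by blast
  show "openin Z E"
    unfolding E
  proof (rule openin_orbit_preimage[OF assms(2)])
    fix i assume "i < n"
    then show "openin Z (A i)"
      using A assms(1) unfolding open_cover_def by blast
  qed
next
  fix y assume y: "y \<in> topspace Z"
  then have "\<forall>i. \<exists>A. A \<in> U \<and> (f ^^ i) y \<in> A"
    using funpow_in_topspace[OF assms(2) y] assms(1) unfolding open_cover_def by blast
  then have "\<exists>A. \<forall>i. A i \<in> U \<and> (f ^^ i) y \<in> A i"
    by (rule choice)
  then obtain A where A: "\<forall>i. A i \<in> U \<and> (f ^^ i) y \<in> A i" ..
  have "{z \<in> topspace Z. \<forall>i<n. (f ^^ i) z \<in> A i} \<in> join_cover Z f U n"
    unfolding join_cover_def using A by (intro CollectI exI[of _ A] conjI refl) blast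
  then show "y \<in> \<Union> (join_cover Z f U n)"
    using y A by blast
qed

lemma min_subcover_card_attained:
  assumes "compact_space Z" and "open_cover Z U"
  obtains V where "V \<subseteq> U" "finite V" "card V = min_subcover_card Z U" "topspace Z \<subseteq> \<Union>V"
proof -
  obtain V0 where "finite V0" "V0 \<subseteq> U" "topspace Z \<subseteq> \<Union>V0"
    using assms unfolding compact_space_def compactin_def open_cover_def by meson
  then have "\<exists>n V. V \<subseteq> U \<and> finite V \<and> card V = n \<and> topspace Z \<subseteq> \<Union>V"
    by blast
  from LeastI_ex[OF this] show thesis
    using that unfolding min_subcover_card_def by blast
qed

lemma min_subcover_card_le:
  assumes "V \<subseteq> U" and "finite V" and "topspace Z \<subseteq> \<Union>V"
  shows "min_subcover_card Z U \<le> card V"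
  unfolding min_subcover_card_def using assms by (blast intro: Least_le)

(* A member of join_cover is determined by an n-tuple of members of the cover; below we work
   with finite families of such tuples that follow every orbit segment of length n. *)
lemma min_subcover_card_join_cover_le:
  assumes "finite \<A>" and "\<And>A i. A \<in> \<A> \<Longrightarrow> i < n \<Longrightarrow> A i \<in> U"
    and "\<And>y. y \<in> topspace Z \<Longrightarrow> \<exists>A\<in>\<A>. \<forall>i<n. (f ^^ i) y \<in> A i"
  shows "min_subcover_card Z (join_cover Z f U n) \<le> card \<A>"
proof -
  define orbit_set where "orbit_set A = {y \<in> topspace Z. \<forall>i<n. (f ^^ i) y \<in> A i}" for A
  have "min_subcover_card Z (join_cover Z f U n) \<le> card (orbit_set ` \<A>)"
  proof (rule min_subcover_card_le)
    show "orbit_set ` \<A> \<subseteq> join_cover Z f U n"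
      using assms(2) unfolding orbit_set_def join_cover_def by blast
    show "topspace Z \<subseteq> \<Union> (orbit_set ` \<A>)"
      using assms(3) unfolding orbit_set_def by blast
  qed (use assms(1) in simp)
  also have "\<dots> \<le> card \<A>"
    using assms(1) by (rule card_image_le)
  finally show ?thesis .
qed

lemma join_cover_tracking_family:
  assumes "compact_space Z" and "open_cover Z U" and "continuous_map Z Z f"
  obtains \<A> where "finite \<A>" "card \<A> \<le> min_subcover_card Z (join_cover Z f U n)"
    "\<And>A i. A \<in> \<A> \<Longrightarrow> i < n \<Longrightarrow> A i \<in> U"
    "\<And>y. y \<in> topspace Z \<Longrightarrow> \<exists>A\<in>\<A>. \<forall>i<n. (f ^^ i) y \<in> A i"
proof -
  obtain V where V: "V \<subseteq> join_cover Z f U n" "finite V"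
    "card V = min_subcover_card Z (join_cover Z f U n)" "topspace Z \<subseteq> \<Union>V"
    using min_subcover_card_attained[OF assms(1) open_cover_join_cover[OF assms(2,3)]] by blast
  then have "\<forall>E\<in>V. \<exists>A. E = {y \<in> topspace Z. \<forall>i<n. (f ^^ i) y \<in> A i} \<and> (\<forall>i<n. A i \<in> U)"
    unfolding join_cover_def by blast
  then have "\<exists>A. \<forall>E\<in>V. E = {y \<in> topspace Z. \<forall>i<n. (f ^^ i) y \<in> A E i} \<and> (\<forall>i<n. A E i \<in> U)"
    by (rule bchoice)
  then obtain A where A: "\<forall>E\<in>V. E = {y \<in> topspace Z. \<forall>i<n. (f ^^ i) y \<in> A E i} \<and> (\<forall>i<n. A E i \<in> U)" ..
  show thesis
  proof (rule that[of "A ` V"])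
    show "card (A ` V) \<le> min_subcover_card Z (join_cover Z f U n)"
      using V(2,3) card_image_le by metis
    fix y assume "y \<in> topspace Z"
    then obtain E where "E \<in> V" "y \<in> E"
      using V(4) by blast
    then show "\<exists>B\<in>A ` V. \<forall>i<n. (f ^^ i) y \<in> B i"
      using A by blast
  qed (use V(2) A in auto)
qed

lemma cover_entropy_le_topological_entropy:
  "open_cover Z U \<Longrightarrow> cover_entropy Z f U \<le> topological_entropy Z f"
  unfolding topological_entropy_def by (rule SUP_upper) simp

section \<open>Growth rates\<close>

lemma ln_of_nat_mono:
  "a \<le> b \<Longrightarrow> ln (real a) \<le> ln (real b)"
  by (cases "a = 0"; cases "b = 0") auto

lemma limsup_ln_growth_le:
  fixes a b :: "nat \<Rightarrow> nat" and C m :: nat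
  assumes bound: "\<And>n. a n \<le> b n * C ^ (n div m + 1)" and "m > 0" and "C \<ge> 1"
  shows "limsup (\<lambda>n. ereal (ln (a (Suc n)) / Suc n))
       \<le> limsup (\<lambda>n. ereal (ln (b (Suc n)) / Suc n)) + ereal (ln C / m)"
proof -
  define L where "L = ln (real C)"
  have "L \<ge> 0"
    using \<open>C \<ge> 1\<close> unfolding L_def by simp
  have step: "ln (a k) / k \<le> ln (b k) / k + (L / m + L / k)" if "k > 0" for k
  proof -
    have "ln (a k) \<le> ln (real (b k * C ^ (k div m + 1)))"
      using bound by (rule ln_of_nat_mono)
    also have "\<dots> \<le> ln (b k) + (k div m + 1) * L"
      using \<open>C \<ge> 1\<close> \<open>L \<ge> 0\<close> unfolding L_def by (cases "b k = 0") (simp_all add: ln_mult ln_realpow algebra_simps)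
    also have "(k div m + 1) * L \<le> (k / m + 1) * L"
    proof -
      have "real (k div m) * m \<le> k"
        by (metis of_nat_le_iff of_nat_mult div_times_less_eq_dividend)
      then show ?thesis
        using \<open>L \<ge> 0\<close> \<open>m > 0\<close> by (intro mult_right_mono) (simp_all add: le_divide_eq)
    qed
    finally show ?thesis
      using that \<open>m > 0\<close> by (simp add: field_simps)
  qed
  have "limsup (\<lambda>n. ereal (ln (a (Suc n)) / Suc n))
      \<le> limsup (\<lambda>n. ereal (ln (b (Suc n)) / Suc n) + ereal (L / m + L / Suc n))"
  proof (intro Limsup_mono always_eventually allI)
    fix n
    show "ereal (ln (a (Suc n)) / Suc n) \<le> ereal (ln (b (Suc n)) / Suc n) + ereal (L / m + L / Suc n)"
      using step[of "Suc n"] by simp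
  qed
  also have "\<dots> \<le> limsup (\<lambda>n. ereal (ln (b (Suc n)) / Suc n)) + limsup (\<lambda>n. ereal (L / m + L / Suc n))"
    by (rule ereal_limsup_add_mono)
  also have "limsup (\<lambda>n. ereal (L / m + L / Suc n)) = ereal (L / m)"
  proof (rule lim_imp_Limsup)
    have "(\<lambda>n. L / m + L / real (Suc n)) \<longlonglongrightarrow> L / m"
      by real_asymp
    then show "(\<lambda>n. ereal (L / m + L / Suc n)) \<longlonglongrightarrow> ereal (L / m)"
      by (rule tendsto_ereal)
  qed simp
  finally show ?thesis
    unfolding L_def .
qed

lemma ereal_le_of_le_add_vanishing:
  fixes x y :: ereal and f :: "nat \<Rightarrow> real"
  assumes "\<And>m. m > 0 \<Longrightarrow> x \<le> y + ereal (f m)" and "f \<longlonglongrightarrow> 0"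
  shows "x \<le> y"
proof (rule ereal_le_epsilon2)
  fix \<epsilon> :: real assume "\<epsilon> > 0"
  have "\<forall>\<^sub>F m in sequentially. m > 0 \<and> f m < \<epsilon>"
    using \<open>\<epsilon> > 0\<close> by (intro eventually_conj eventually_gt_at_top order_tendstoD(2)[OF assms(2)])
  then obtain m where "m > 0" "f m < \<epsilon>"
    unfolding eventually_sequentially by blast
  then have "x \<le> y + ereal (f m)"
    using assms(1) by blast
  also have "\<dots> \<le> y + ereal \<epsilon>"
    using \<open>f m < \<epsilon>\<close> by (intro add_left_mono) simp
  finally show "x \<le> y + ereal \<epsilon>" .
qed

section \<open>Entropy under semiconjugacies\<close>

lemma card_block_choices_le:
  fixes m n C :: nat
  assumes "m > 0" and "\<And>j. j * m < n \<Longrightarrow> finite (S j) \<and> card (S j) \<le> C" and "C \<ge> 1"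
  shows "finite (\<Pi>\<^sub>E j\<in>{j. j * m < n}. S j)" and "card (\<Pi>\<^sub>E j\<in>{j. j * m < n}. S j) \<le> C ^ (n div m + 1)"
proof -
  have "{j. j * m < n} \<subseteq> {..n div m}"
    using \<open>m > 0\<close> by (auto simp: less_eq_div_iff_mult_less_eq)
  then have J: "finite {j. j * m < n}" "card {j. j * m < n} \<le> n div m + 1"
    using finite_subset card_mono[of "{..n div m}"] by auto
  then show "finite (\<Pi>\<^sub>E j\<in>{j. j * m < n}. S j)"
    using assms(2) by (intro finite_PiE) auto
  have "card (\<Pi>\<^sub>E j\<in>{j. j * m < n}. S j) = (\<Prod>j\<in>{j. j * m < n}. card (S j))"
    using J(1) by (rule card_PiE)
  also have "\<dots> \<le> (\<Prod>j\<in>{j. j * m < n}. C)"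
    using assms(2) by (intro prod_mono) auto
  also have "\<dots> \<le> C ^ (n div m + 1)"
    using power_increasing[OF J(2) \<open>C \<ge> 1\<close>] by simp
  finally show "card (\<Pi>\<^sub>E j\<in>{j. j * m < n}. S j) \<le> C ^ (n div m + 1)" .
qed

lemma orbit_in_glued_blocks:
  fixes m n :: nat
  assumes "m > 0" and "\<And>j. j * m < n \<Longrightarrow> \<exists>A\<in>S j. \<forall>r<m. (f ^^ r) ((f ^^ (j * m)) y) \<in> A r"
  shows "\<exists>\<kappa>\<in>(\<Pi>\<^sub>E j\<in>{j. j * m < n}. S j). \<forall>i<n. (f ^^ i) y \<in> \<kappa> (i div m) (i mod m)"
proof -
  have "\<forall>j\<in>{j. j * m < n}. \<exists>A. A \<in> S j \<and> (\<forall>r<m. (f ^^ r) ((f ^^ (j * m)) y) \<in> A r)"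
    using assms(2) by blast
  then obtain A where A: "\<forall>j\<in>{j. j * m < n}. A j \<in> S j \<and> (\<forall>r<m. (f ^^ r) ((f ^^ (j * m)) y) \<in> A j r)"
    by (rule bchoice[THEN exE])
  have block: "i div m * m < n" if "i < n" for i
    using that div_times_less_eq_dividend le_less_trans by blast
  have "(f ^^ i) y \<in> restrict A {j. j * m < n} (i div m) (i mod m)" if "i < n" for i
  proof -
    have "(f ^^ i) y = (f ^^ (i mod m)) ((f ^^ (i div m * m)) y)"
      by (metis div_mult_mod_eq add.commute funpow_add comp_apply)
    then show ?thesis
      using A block[OF that] \<open>m > 0\<close> by simp
  qed
  moreover have "restrict A {j. j * m < n} \<in> (\<Pi>\<^sub>E j\<in>{j. j * m < n}. S j)"
    using A by simp
  ultimately show ?thesis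
    by blast
qed

locale semiconjugacy =
  fixes Y :: "'b topology" and T :: "'b \<Rightarrow> 'b" and X :: "'a topology" and H :: "'a \<Rightarrow> 'a"
    and \<pi> :: "'b \<Rightarrow> 'a"
  assumes continuous_T: "continuous_map Y Y T"
    and continuous_H: "continuous_map X X H"
    and continuous_\<pi>: "continuous_map Y X \<pi>"
    and semiconj: "\<And>y. y \<in> topspace Y \<Longrightarrow> \<pi> (T y) = H (\<pi> y)"
begin

lemma funpow_semiconj: "y \<in> topspace Y \<Longrightarrow> \<pi> ((T ^^ n) y) = (H ^^ n) (\<pi> y)"
  by (induction n) (simp_all add: semiconj funpow_in_topspace[OF continuous_T])

lemma open_cover_preimage:
  assumes "open_cover X U"
  shows "open_cover Y ((\<lambda>B. {y \<in> topspace Y. \<pi> y \<in> B}) ` U)"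
  unfolding open_cover_def
proof (intro conjI ballI subsetI)
  fix A assume "A \<in> (\<lambda>B. {y \<in> topspace Y. \<pi> y \<in> B}) ` U"
  then obtain B where "B \<in> U" and "A = {y \<in> topspace Y. \<pi> y \<in> B}"
    by blast
  then show "openin Y A"
    using assms unfolding open_cover_def by (simp add: openin_continuous_map_preimage[OF continuous_\<pi>])
next
  fix y assume y: "y \<in> topspace Y"
  then have "\<pi> y \<in> topspace X"
    using continuous_map_image_subset_topspace[OF continuous_\<pi>] by blast
  then obtain B where "B \<in> U" and "\<pi> y \<in> B"
    using assms unfolding open_cover_def by blast
  then show "y \<in> \<Union> ((\<lambda>B. {y \<in> topspace Y. \<pi> y \<in> B}) ` U)"
    using y by blast
qed

lemma min_subcover_card_join_cover_le_preimage:
  assumes compact: "compact_space Y" and surj: "\<pi> ` topspace Y = topspace X" and U: "open_cover X U"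
  defines "pull \<equiv> \<lambda>B. {y \<in> topspace Y. \<pi> y \<in> B}"
  shows "min_subcover_card X (join_cover X H U n) \<le> min_subcover_card Y (join_cover Y T (pull ` U) n)"
proof -
  obtain \<A> where \<A>: "finite \<A>" "card \<A> \<le> min_subcover_card Y (join_cover Y T (pull ` U) n)"
    "\<And>A i. A \<in> \<A> \<Longrightarrow> i < n \<Longrightarrow> A i \<in> pull ` U"
    "\<And>y. y \<in> topspace Y \<Longrightarrow> \<exists>A\<in>\<A>. \<forall>i<n. (T ^^ i) y \<in> A i"
    using join_cover_tracking_family[OF compact open_cover_preimage[OF U] continuous_T]
    unfolding pull_def by blast
  have "\<exists>B. \<forall>i. i < n \<longrightarrow> B i \<in> U \<and> A i = pull (B i)" if "A \<in> \<A>" for A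
    using \<A>(3)[OF that] by (intro choice) blast
  then have "\<exists>B. \<forall>A\<in>\<A>. \<forall>i. i < n \<longrightarrow> B A i \<in> U \<and> A i = pull (B A i)"
    by (intro bchoice ballI)
  then obtain B where B: "\<forall>A\<in>\<A>. \<forall>i. i < n \<longrightarrow> B A i \<in> U \<and> A i = pull (B A i)" ..
  have "min_subcover_card X (join_cover X H U n) \<le> card (B ` \<A>)"
  proof (rule min_subcover_card_join_cover_le)
    fix x assume "x \<in> topspace X"
    then obtain y where y: "y \<in> topspace Y" "x = \<pi> y"
      using surj by blast
    then obtain A where "A \<in> \<A>" "\<forall>i<n. (T ^^ i) y \<in> A i"
      using \<A>(4) by blast
    then have "\<forall>i<n. (H ^^ i) x \<in> B A i"
      using B y funpow_semiconj unfolding pull_def by auto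
    then show "\<exists>B'\<in>B ` \<A>. \<forall>i<n. (H ^^ i) x \<in> B' i"
      using \<open>A \<in> \<A>\<close> by blast
  qed (use \<A>(1) B in auto)
  also have "\<dots> \<le> card \<A>"
    using \<A>(1) by (rule card_image_le)
  finally show ?thesis
    using \<A>(2) by simp
qed

lemma topological_entropy_le_of_surjective:
  assumes compact: "compact_space Y" and surj: "\<pi> ` topspace Y = topspace X"
  shows "topological_entropy X H \<le> topological_entropy Y T"
  unfolding topological_entropy_def[of X]
proof (rule SUP_least, unfold mem_Collect_eq)
  fix U assume U: "open_cover X U"
  let ?U' = "(\<lambda>B. {y \<in> topspace Y. \<pi> y \<in> B}) ` U"
  have "min_subcover_card X (join_cover X H U n) \<le> min_subcover_card Y (join_cover Y T ?U' n) * 1 ^ (n div 1 + 1)"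
    for n
    using min_subcover_card_join_cover_le_preimage[OF compact surj U] by simp
  then have "cover_entropy X H U \<le> cover_entropy Y T ?U' + ereal (ln (real 1) / real 1)"
    unfolding cover_entropy_def by (rule limsup_ln_growth_le) simp_all
  also have "\<dots> \<le> topological_entropy Y T"
    using cover_entropy_le_topological_entropy[OF open_cover_preimage[OF U]] by simp
  finally show "cover_entropy X H U \<le> topological_entropy Y T" .
qed

lemma min_subcover_card_join_cover_block_le:
  assumes compact: "compact_space X" and U: "open_cover X U" and "m > 0" and "C \<ge> 1"
    and blocks: "\<And>V. V \<in> U \<Longrightarrow> \<exists>S. finite S \<and> card S \<le> C \<and> (\<forall>A\<in>S. \<forall>i<m. A i \<in> W) \<and>
                   (\<forall>y\<in>topspace Y. \<pi> y \<in> V \<longrightarrow> (\<exists>A\<in>S. \<forall>i<m. (T ^^ i) y \<in> A i))"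
  shows "min_subcover_card Y (join_cover Y T W n)
       \<le> min_subcover_card X (join_cover X H U n) * C ^ (n div m + 1)"
proof -
  \<comment> \<open>Cut an orbit segment of length n into blocks of length m.  The j-th block starts at
     T^(jm) y, whose image under \<pi> lies in B (jm), so one of at most C tuples follows it.\<close>
  have "\<forall>V\<in>U. \<exists>S. finite S \<and> card S \<le> C \<and> (\<forall>A\<in>S. \<forall>i<m. A i \<in> W) \<and>
                   (\<forall>y\<in>topspace Y. \<pi> y \<in> V \<longrightarrow> (\<exists>A\<in>S. \<forall>i<m. (T ^^ i) y \<in> A i))"
    using blocks by blast
  then obtain S where S: "\<forall>V\<in>U. finite (S V) \<and> card (S V) \<le> C \<and> (\<forall>A\<in>S V. \<forall>i<m. A i \<in> W) \<and>
                   (\<forall>y\<in>topspace Y. \<pi> y \<in> V \<longrightarrow> (\<exists>A\<in>S V. \<forall>i<m. (T ^^ i) y \<in> A i))"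
    by (rule bchoice[THEN exE])
  obtain \<B> where \<B>: "finite \<B>" "card \<B> \<le> min_subcover_card X (join_cover X H U n)"
      "\<And>B i. B \<in> \<B> \<Longrightarrow> i < n \<Longrightarrow> B i \<in> U"
      "\<And>x. x \<in> topspace X \<Longrightarrow> \<exists>B\<in>\<B>. \<forall>i<n. (H ^^ i) x \<in> B i"
    using join_cover_tracking_family[OF compact U continuous_H] by blast
  define choices where "choices B = (\<Pi>\<^sub>E j\<in>{j. j * m < n}. S (B (j * m)))" for B
  define glue where "glue \<kappa> i = \<kappa> (i div m) (i mod m)" for \<kappa> :: "nat \<Rightarrow> nat \<Rightarrow> 'b set" and i
  define \<A> where "\<A> = (\<Union>B\<in>\<B>. glue ` choices B)"
  have choices: "finite (choices B)" "card (choices B) \<le> C ^ (n div m + 1)" if "B \<in> \<B>" for B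
  proof -
    have "finite (S (B (j * m))) \<and> card (S (B (j * m))) \<le> C" if "j * m < n" for j
      using S \<B>(3)[OF \<open>B \<in> \<B>\<close> that] by blast
    from card_block_choices_le[where S = "\<lambda>j. S (B (j * m))" and n = n, OF \<open>m > 0\<close> this \<open>C \<ge> 1\<close>]
    show "finite (choices B)" "card (choices B) \<le> C ^ (n div m + 1)"
      unfolding choices_def by blast+
  qed
  have "card \<A> \<le> (\<Sum>B\<in>\<B>. card (glue ` choices B))"
    unfolding \<A>_def using \<B>(1) by (rule card_UN_le)
  also have "\<dots> \<le> card \<B> * C ^ (n div m + 1)"
    using sum_mono[of \<B> "\<lambda>B. card (glue ` choices B)" "\<lambda>_. C ^ (n div m + 1)"]
      choices card_image_le order_trans by fastforce
  finally have card_\<A>: "card \<A> \<le> card \<B> * C ^ (n div m + 1)" .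
  have "min_subcover_card Y (join_cover Y T W n) \<le> card \<A>"
  proof (rule min_subcover_card_join_cover_le)
    show "finite \<A>"
      unfolding \<A>_def using \<B>(1) choices by blast
  next
    fix A i assume "A \<in> \<A>" and "i < n"
    then obtain B \<kappa> where "B \<in> \<B>" "\<kappa> \<in> choices B" "A = glue \<kappa>"
      unfolding \<A>_def by blast
    moreover have "i div m * m < n"
      using \<open>i < n\<close> div_times_less_eq_dividend le_less_trans by blast
    ultimately show "A i \<in> W"
      using S \<B>(3) \<open>m > 0\<close> unfolding choices_def glue_def by fastforce
  next
    fix y assume y: "y \<in> topspace Y"
    then obtain B where B: "B \<in> \<B>" "\<forall>i<n. (H ^^ i) (\<pi> y) \<in> B i"
      using \<B>(4) continuous_map_image_subset_topspace[OF continuous_\<pi>] by blast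
    have "\<exists>A\<in>S (B (j * m)). \<forall>r<m. (T ^^ r) ((T ^^ (j * m)) y) \<in> A r" if "j * m < n" for j
      using S \<B>(3)[OF B(1) that] B(2) that funpow_semiconj[OF y] funpow_in_topspace[OF continuous_T y]
      by simp
    from orbit_in_glued_blocks[where S = "\<lambda>j. S (B (j * m))", OF \<open>m > 0\<close> this]
    obtain \<kappa> where "\<kappa> \<in> choices B" "\<forall>i<n. (T ^^ i) y \<in> glue \<kappa> i"
      unfolding choices_def glue_def by blast
    then show "\<exists>A\<in>\<A>. \<forall>i<n. (T ^^ i) y \<in> A i"
      unfolding \<A>_def using B(1) by blast
  qed
  with card_\<A> \<B>(2) show ?thesis
    by (meson le_trans mult_le_mono1)
qed

lemma cover_entropy_le_block_bound:
  fixes m C :: nat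
  assumes compact: "compact_space X" and U: "open_cover X U" and "m > 0" and "C \<ge> 1"
    and blocks: "\<And>V. V \<in> U \<Longrightarrow> \<exists>S. finite S \<and> card S \<le> C \<and> (\<forall>A\<in>S. \<forall>i<m. A i \<in> W) \<and>
                   (\<forall>y\<in>topspace Y. \<pi> y \<in> V \<longrightarrow> (\<exists>A\<in>S. \<forall>i<m. (T ^^ i) y \<in> A i))"
  shows "cover_entropy Y T W \<le> topological_entropy X H + ereal (ln C / m)"
proof -
  have "cover_entropy Y T W \<le> cover_entropy X H U + ereal (ln C / m)"
    unfolding cover_entropy_def
    using min_subcover_card_join_cover_block_le[OF assms] \<open>m > 0\<close> \<open>C \<ge> 1\<close>
    by (rule limsup_ln_growth_le)
  also have "\<dots> \<le> topological_entropy X H + ereal (ln C / m)"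
    using cover_entropy_le_topological_entropy[OF U] by (rule add_right_mono)
  finally show ?thesis .
qed

lemma tracking_family_neighbourhood:
  assumes "compact_space Y" and "Hausdorff_space X" and "x \<in> topspace X"
    and "\<And>A i. A \<in> S \<Longrightarrow> i < m \<Longrightarrow> openin Y (A i)"
    and "\<And>y. y \<in> topspace Y \<Longrightarrow> \<pi> y = x \<Longrightarrow> \<exists>A\<in>S. \<forall>i<m. (T ^^ i) y \<in> A i"
  obtains V where "openin X V" "x \<in> V"
    "\<And>y. y \<in> topspace Y \<Longrightarrow> \<pi> y \<in> V \<Longrightarrow> \<exists>A\<in>S. \<forall>i<m. (T ^^ i) y \<in> A i"
proof -
  define tracked where "tracked = (\<Union>A\<in>S. {y \<in> topspace Y. \<forall>i<m. (T ^^ i) y \<in> A i})"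
  have "openin Y {y \<in> topspace Y. \<forall>i<m. (T ^^ i) y \<in> A i}" if "A \<in> S" for A
    using continuous_T assms(4)[OF that] by (rule openin_orbit_preimage)
  then have "openin Y tracked"
    unfolding tracked_def by (intro openin_Union) auto
  moreover have "{y \<in> topspace Y. \<pi> y = x} \<subseteq> tracked"
    unfolding tracked_def using assms(5) by blast
  moreover have "closed_map Y X \<pi>"
    using continuous_imp_closed_map[OF continuous_\<pi> assms(1,2)] .
  ultimately obtain V where V: "openin X V" "x \<in> V" "{y \<in> topspace Y. \<pi> y \<in> V} \<subseteq> tracked"
    using assms(3) unfolding closed_map_fibre_neighbourhood by (elim conjE allE impE) blast+
  show thesis
  proof (rule that[OF V(1,2)])
    fix y assume "y \<in> topspace Y" and "\<pi> y \<in> V"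
    then show "\<exists>A\<in>S. \<forall>i<m. (T ^^ i) y \<in> A i"
      using V(3) unfolding tracked_def by blast
  qed
qed

end

section \<open>Vertical Lebesgue numbers in X \<times> \<real>\<close>

lemma openin_strict_hypograph_lsc:
  assumes "lsc_on X f"
  shows "openin (prod_topology X euclideanreal) {p \<in> topspace X \<times> UNIV. snd p < f (fst p)}"
proof -
  have "{p \<in> topspace X \<times> UNIV. snd p < f (fst p)} = (\<Union>a. {x \<in> topspace X. a < f x} \<times> {..<a})"
    by auto (meson dense)
  moreover have "openin (prod_topology X euclideanreal) ({x \<in> topspace X. a < f x} \<times> {..<a})" for a
    using assms unfolding lsc_on_def by (simp add: openin_prod_Times_iff)
  ultimately show ?thesis
    by (metis (no_types, lifting) imageE openin_Union)
qed

lemma openin_strict_epigraph_usc: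
  assumes "usc_on X f"
  shows "openin (prod_topology X euclideanreal) {p \<in> topspace X \<times> UNIV. f (fst p) < snd p}"
proof -
  have "{p \<in> topspace X \<times> UNIV. f (fst p) < snd p} = (\<Union>a. {x \<in> topspace X. f x < a} \<times> {a<..})"
    by auto (meson dense)
  moreover have "openin (prod_topology X euclideanreal) ({x \<in> topspace X. f x < a} \<times> {a<..})" for a
    using assms unfolding usc_on_def by (simp add: openin_prod_Times_iff)
  ultimately show ?thesis
    by (metis (no_types, lifting) imageE openin_Union)
qed

lemma vertical_box_neighbourhood:
  assumes "openin (subtopology (prod_topology X euclideanreal) F) A" and "p \<in> A"
  obtains G r where "openin X G" "fst p \<in> G" "r > 0"
    "\<And>q. q \<in> F \<Longrightarrow> fst q \<in> G \<Longrightarrow> dist (snd q) (snd p) < r \<Longrightarrow> q \<in> A"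
proof -
  obtain Q where Q: "openin (prod_topology X euclideanreal) Q" "A = Q \<inter> F"
    using assms(1) unfolding openin_subtopology by blast
  then have "p \<in> Q"
    using assms(2) by blast
  then obtain G J where GJ: "openin X G" "openin euclideanreal J" "fst p \<in> G" "snd p \<in> J" "G \<times> J \<subseteq> Q"
    using Q(1) unfolding openin_prod_topology_alt by (metis prod.collapse)
  obtain r where "r > 0" "ball (snd p) r \<subseteq> J"
    using GJ(2,4) open_contains_ball by (metis open_openin)
  show thesis
  proof (rule that[OF GJ(1,3) \<open>r > 0\<close>])
    fix q assume "q \<in> F" "fst q \<in> G" "dist (snd q) (snd p) < r"
    then have "q \<in> G \<times> J"
      using \<open>ball (snd p) r \<subseteq> J\<close> by (auto simp: mem_Times_iff dist_commute)
    then show "q \<in> A"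
      using GJ(5) Q(2) \<open>q \<in> F\<close> by blast
  qed
qed

lemma finite_half_box_subcover:
  assumes compact: "compactin (prod_topology X euclideanreal) F"
    and box: "\<And>p. p \<in> F \<Longrightarrow> openin X (G p) \<and> fst p \<in> G p \<and> r p > 0"
  obtains P where "finite P" "P \<subseteq> F" "F \<subseteq> (\<Union>p\<in>P. G p \<times> ball (snd p) (r p / 2))"
proof -
  define half_box where "half_box p = G p \<times> ball (snd p) (r p / 2)" for p
  have "\<forall>B\<in>half_box ` F. openin (prod_topology X euclideanreal) B"
    unfolding half_box_def using box by (auto simp: openin_prod_Times_iff)
  moreover have "F \<subseteq> \<Union> (half_box ` F)"
  proof
    fix p assume "p \<in> F"
    then have "p \<in> half_box p"
      unfolding half_box_def using box[OF \<open>p \<in> F\<close>] by (simp add: mem_Times_iff)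
    then show "p \<in> \<Union> (half_box ` F)"
      using \<open>p \<in> F\<close> by blast
  qed
  ultimately have "\<exists>\<P>. finite \<P> \<and> \<P> \<subseteq> half_box ` F \<and> F \<subseteq> \<Union>\<P>"
    by (intro compact[unfolded compactin_def, THEN conjunct2, rule_format] conjI)
  then obtain \<P> where "finite \<P>" "\<P> \<subseteq> half_box ` F" and cover: "F \<subseteq> \<Union>\<P>"
    by blast
  then obtain P where P: "P \<subseteq> F" "finite P" "\<P> = half_box ` P"
    using finite_subset_image[of \<P> half_box F] by blast
  show thesis
  proof (rule that)
    show "finite P" "P \<subseteq> F"
      using P by simp_all
    show "F \<subseteq> (\<Union>p\<in>P. G p \<times> ball (snd p) (r p / 2))"
      using cover P(3) unfolding half_box_def by simp
  qed
qed

lemma vertical_lebesgue_number: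
  assumes compact: "compactin (prod_topology X euclideanreal) F"
    and W: "\<And>A. A \<in> W \<Longrightarrow> openin (subtopology (prod_topology X euclideanreal) F) A" and "F \<subseteq> \<Union>W"
  obtains \<delta> where "\<delta> > 0"
    "\<And>p. p \<in> F \<Longrightarrow> \<exists>A\<in>W. \<forall>q\<in>F. fst q = fst p \<and> dist (snd q) (snd p) < \<delta> \<longrightarrow> q \<in> A"
proof -
  have "\<exists>G r A. openin X G \<and> fst p \<in> G \<and> r > 0 \<and> A \<in> W \<and>
          (\<forall>q\<in>F. fst q \<in> G \<and> dist (snd q) (snd p) < r \<longrightarrow> q \<in> A)" if p: "p \<in> F" for p
  proof -
    obtain A where "A \<in> W" "p \<in> A"
      using \<open>F \<subseteq> \<Union>W\<close> p by blast
    then show ?thesis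
      using vertical_box_neighbourhood[OF W] by metis
  qed
  then obtain G r A where box: "\<And>p. p \<in> F \<Longrightarrow> openin X (G p) \<and> fst p \<in> G p \<and> r p > 0 \<and> A p \<in> W \<and>
          (\<forall>q\<in>F. fst q \<in> G p \<and> dist (snd q) (snd p) < r p \<longrightarrow> q \<in> A p)"
    by metis
  obtain P where P: "finite P" "P \<subseteq> F" "F \<subseteq> (\<Union>p\<in>P. G p \<times> ball (snd p) (r p / 2))"
    using finite_half_box_subcover[OF compact, of G r] box by blast
  define \<delta> where "\<delta> = Min (insert 1 ((\<lambda>p. r p / 2) ` P))"
  have "\<delta> > 0"
    unfolding \<delta>_def using P box by (subst Min_gr_iff) auto
  moreover have "\<exists>A\<in>W. \<forall>q\<in>F. fst q = fst p \<and> dist (snd q) (snd p) < \<delta> \<longrightarrow> q \<in> A" if "p \<in> F" for p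
  proof -
    obtain p' where "p' \<in> P" and p_in: "fst p \<in> G p'" "dist (snd p) (snd p') < r p' / 2"
      using P \<open>p \<in> F\<close> by (force simp: mem_Times_iff dist_commute)
    have p'F: "p' \<in> F"
      using P(2) \<open>p' \<in> P\<close> by blast
    have "\<delta> \<le> r p' / 2"
      unfolding \<delta>_def using P \<open>p' \<in> P\<close> by (intro Min_le) auto
    have "q \<in> A p'" if "q \<in> F" "fst q = fst p" "dist (snd q) (snd p) < \<delta>" for q
    proof -
      have "dist (snd q) (snd p') < r p'"
        using dist_triangle[of "snd q" "snd p'" "snd p"] that(3) p_in(2) \<open>\<delta> \<le> r p' / 2\<close> by linarith
      then show ?thesis
        using box[OF p'F] that(1,2) p_in(1) by auto
    qed
    then show ?thesis
      using box[OF p'F] by blast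
  qed
  ultimately show thesis
    using that by blast
qed

section \<open>Codes of monotone functions\<close>

lemma dist_less_of_floor_divide_eq:
  fixes u v \<delta> :: real
  assumes "\<delta> > 0" and "\<lfloor>u / \<delta>\<rfloor> = \<lfloor>v / \<delta>\<rfloor>"
  shows "dist u v < \<delta>"
proof -
  have "\<bar>u / \<delta> - v / \<delta>\<bar> < 1"
    using assms(2) by linarith
  then show ?thesis
    using assms(1) by (simp add: dist_real_def diff_divide_distrib[symmetric] abs_divide divide_less_eq)
qed

lemma floor_divide_mem_range:
  fixes v \<delta> :: real
  assumes "\<delta> > 0" and "0 \<le> v" and "v \<le> 1"
  shows "\<lfloor>v / \<delta>\<rfloor> \<in> {0..int (nat \<lceil>1 / \<delta>\<rceil>)}"
proof -
  have "0 \<le> v / \<delta>" "v / \<delta> \<le> 1 / \<delta>"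
    using assms by (simp_all add: divide_right_mono)
  then show ?thesis
    by (simp add: floor_le_ceiling le_floor_iff order_trans[OF floor_mono])
qed

lemma continuous_inj_on_interval_monotone:
  fixes f :: "real \<Rightarrow> real"
  assumes "continuous_on {a..b} f" and "inj_on f {a..b}"
  shows "mono_on {a..b} f \<or> antimono_on {a..b} f"
  using injective_eq_monotone_map[of "{a..b}" f] assms
  by (auto simp: strict_mono_iff_mono strict_antimono_iff_antimono)

lemma finite_bounded_codes:
  fixes d :: "nat \<Rightarrow> 'a \<Rightarrow> int"
  assumes "\<And>i t. i < m \<Longrightarrow> t \<in> I \<Longrightarrow> d i t \<in> {0..K}"
  shows "finite ((\<lambda>t. \<lambda>i\<in>{..<m}. d i t) ` I)"
proof (rule finite_subset)
  show "(\<lambda>t. \<lambda>i\<in>{..<m}. d i t) ` I \<subseteq> (\<Pi>\<^sub>E i\<in>{..<m}. {0..K})"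
    using assms by (simp add: image_subset_iff restrict_PiE_iff)
qed (simp add: finite_PiE)

lemma card_mono_codes_le:
  fixes d :: "nat \<Rightarrow> 'a::linorder \<Rightarrow> int" and K :: nat
  assumes mono: "\<And>i. i < m \<Longrightarrow> mono_on I (d i)"
    and range: "\<And>i t. i < m \<Longrightarrow> t \<in> I \<Longrightarrow> d i t \<in> {0..int K}"
  shows "card ((\<lambda>t. \<lambda>i\<in>{..<m}. d i t) ` I) \<le> m * K + 1"
proof -
  define code where "code t = (\<lambda>i\<in>{..<m}. d i t)" for t
  define \<sigma> where "\<sigma> c = (\<Sum>i<m. c i)" for c :: "nat \<Rightarrow> int"
  have \<sigma>_code: "\<sigma> (code t) = (\<Sum>i<m. d i t)" for t
    unfolding \<sigma>_def code_def by simp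
  \<comment> \<open>All coordinates move in the same direction along I, so the sum determines the code.\<close>
  have code_eq: "code s = code t" if "s \<in> I" "t \<in> I" "s \<le> t" "\<sigma> (code s) = \<sigma> (code t)" for s t
  proof -
    have le: "d i s \<le> d i t" if "i < m" for i
      using mono[OF that] \<open>s \<in> I\<close> \<open>t \<in> I\<close> \<open>s \<le> t\<close> by (rule mono_onD)
    have "(\<Sum>i<m. d i t - d i s) = 0"
      using that(4) by (simp add: \<sigma>_code sum_subtractf)
    then have "\<forall>i\<in>{..<m}. d i t - d i s = 0"
      using le by (subst (asm) sum_nonneg_eq_0_iff) auto
    then show ?thesis
      unfolding code_def by (intro restrict_ext) simp
  qed
  have "inj_on \<sigma> (code ` I)"
  proof (rule inj_onI)
    fix c c' assume "c \<in> code ` I" "c' \<in> code ` I" and \<sigma>_eq: "\<sigma> c = \<sigma> c'"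
    then obtain s t where st: "s \<in> I" "t \<in> I" "c = code s" "c' = code t"
      by blast
    show "c = c'"
    proof (cases "s \<le> t")
      case True
      then show ?thesis
        using code_eq[of s t] st \<sigma>_eq by simp
    next
      case False
      then show ?thesis
        using code_eq[of t s] st \<sigma>_eq by simp
    qed
  qed
  then have "card (code ` I) = card (\<sigma> ` code ` I)"
    by (simp add: card_image)
  also have "\<dots> \<le> card {0..int (m * K)}"
  proof (rule card_mono)
    show "\<sigma> ` code ` I \<subseteq> {0..int (m * K)}"
    proof clarify
      fix t assume "t \<in> I"
      have "0 \<le> (\<Sum>i<m. d i t)"
        using range[OF _ \<open>t \<in> I\<close>] by (intro sum_nonneg) simp
      moreover have "(\<Sum>i<m. d i t) \<le> (\<Sum>i<m. int K)"
        using range[OF _ \<open>t \<in> I\<close>] by (intro sum_mono) simp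
      ultimately show "\<sigma> (code t) \<in> {0..int (m * K)}"
        by (simp add: \<sigma>_code)
    qed
  qed simp
  also have "\<dots> = m * K + 1"
    by (metis Suc_eq_plus1 add.commute card_atLeastAtMost_int diff_zero nat_int of_nat_Suc)
  finally show ?thesis
    unfolding code_def .
qed

lemma card_mono_or_antimono_codes_le:
  fixes d :: "nat \<Rightarrow> 'a::linorder \<Rightarrow> int" and K :: nat
  assumes monotone: "\<And>i. i < m \<Longrightarrow> mono_on I (d i) \<or> antimono_on I (d i)"
    and range: "\<And>i t. i < m \<Longrightarrow> t \<in> I \<Longrightarrow> d i t \<in> {0..int K}"
  shows "card ((\<lambda>t. \<lambda>i\<in>{..<m}. d i t) ` I) \<le> m * K + 1"
proof -
  define flip where "flip i v = (if mono_on I (d i) then v else int K - v)" for i v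
  define e where "e i t = flip i (d i t)" for i t
  have "mono_on I (e i)" if "i < m" for i
    using monotone[OF that] unfolding e_def flip_def monotone_on_def by auto
  moreover have e_range: "e i t \<in> {0..int K}" if "i < m" "t \<in> I" for i t
    using range[OF that] unfolding e_def flip_def by auto
  ultimately have e_card: "card ((\<lambda>t. \<lambda>i\<in>{..<m}. e i t) ` I) \<le> m * K + 1"
    by (rule card_mono_codes_le)
  have "(\<lambda>t. \<lambda>i\<in>{..<m}. d i t) ` I = (\<lambda>c. \<lambda>i\<in>{..<m}. flip i (c i)) ` (\<lambda>t. \<lambda>i\<in>{..<m}. e i t) ` I"
    unfolding image_image e_def flip_def by (intro image_cong refl) auto
  moreover have "finite ((\<lambda>t. \<lambda>i\<in>{..<m}. e i t) ` I)"
    using e_range by (rule finite_bounded_codes)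
  ultimately have "card ((\<lambda>t. \<lambda>i\<in>{..<m}. d i t) ` I) \<le> card ((\<lambda>t. \<lambda>i\<in>{..<m}. e i t) ` I)"
    by (simp only: card_image_le)
  with e_card show ?thesis
    by linarith
qed

section \<open>Liftings to fences\<close>

locale fence_lifting =
  fixes X :: "'a topology" and phiL phiU :: "'a \<Rightarrow> real" and H :: "'a \<Rightarrow> 'a"
    and T :: "'a \<times> real \<Rightarrow> 'a \<times> real"
  assumes compact: "compact_space X" and Hausdorff: "Hausdorff_space X"
    and fence_data: "is_fence_data X phiL phiU"
    and continuous_H: "continuous_map X X H"
    and continuous_T: "continuous_map (fence_topology X phiL phiU) (fence_topology X phiL phiU) T"
    and lifting: "is_lifting X phiL phiU H T"
    and inj_on_fibres: "\<And>x. x \<in> topspace X \<Longrightarrow> inj_on T ({x} \<times> fence_fiber X phiL phiU x)"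
begin

abbreviation "F \<equiv> fence X phiL phiU"
abbreviation "Y \<equiv> fence_topology X phiL phiU"

lemma mem_fence: "(x, t) \<in> F \<longleftrightarrow> x \<in> topspace X \<and> phiL x \<le> t \<and> t \<le> phiU x"
  using fence_data by (auto simp: fence_def is_fence_data_def)

lemma fence_subset: "F \<subseteq> topspace X \<times> {0..1}"
  by (auto simp: fence_def)

lemma topspace_fence_topology: "topspace Y = F"
  using fence_subset by (auto simp: fence_topology_def)

lemma fst_fence_image: "fst ` F = topspace X"
proof
  show "topspace X \<subseteq> fst ` F"
  proof
    fix x assume "x \<in> topspace X"
    then have "(x, phiL x) \<in> F"
      using fence_data by (simp add: mem_fence is_fence_data_def)
    then show "x \<in> fst ` F"
      by force
  qed
qed (use fence_subset in auto)

lemma fst_T: "y \<in> F \<Longrightarrow> fst (T y) = H (fst y)"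
  using lifting unfolding is_lifting_def by (cases y) fastforce

lemma continuous_map_fst_fence: "continuous_map Y X fst"
  unfolding fence_topology_def by (rule continuous_map_from_subtopology[OF continuous_map_fst])

sublocale semiconjugacy Y T X H fst
  by unfold_locales (simp_all add: continuous_T continuous_H continuous_map_fst_fence fst_T topspace_fence_topology)

lemma closedin_fence: "closedin (prod_topology X euclideanreal) F"
proof -
  have "F = topspace (prod_topology X euclideanreal)
      - ({p \<in> topspace X \<times> UNIV. snd p < phiL (fst p)} \<union> {p \<in> topspace X \<times> UNIV. phiU (fst p) < snd p})"
    using fence_data by (auto simp: fence_def is_fence_data_def)
  moreover have "lsc_on X phiL" and "usc_on X phiU"
    using fence_data by (simp_all add: is_fence_data_def)
  then have "closedin (prod_topology X euclideanreal) (topspace (prod_topology X euclideanreal)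
      - ({p \<in> topspace X \<times> UNIV. snd p < phiL (fst p)} \<union> {p \<in> topspace X \<times> UNIV. phiU (fst p) < snd p}))"
    by (intro closedin_diff closedin_topspace openin_Un openin_strict_hypograph_lsc openin_strict_epigraph_usc)
  ultimately show ?thesis
    by simp
qed

lemma compactin_fence: "compactin (prod_topology X euclideanreal) F"
proof -
  have "compactin (prod_topology X euclideanreal) (topspace X \<times> {0..1})"
    using compact by (simp add: compactin_Times compact_space_def)
  then show ?thesis
    using fence_subset closedin_fence by (rule closed_compactin)
qed

lemma compact_space_fence_topology: "compact_space Y"
  unfolding fence_topology_def using compactin_fence by (rule compact_space_subtopology)

lemma fence_fibre_eq: "{p \<in> F. fst p = x} = {x} \<times> fence_fiber X phiL phiU x"
  by (auto simp: fence_fiber_def)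

lemma inj_on_funpow_fibre:
  assumes "x \<in> topspace X"
  shows "inj_on (T ^^ n) {p \<in> F. fst p = x}"
  using assms
proof (induction n arbitrary: x)
  case (Suc n)
  have "(T ^^ n) ` {p \<in> F. fst p = x} \<subseteq> {p \<in> F. fst p = (H ^^ n) x}"
    using funpow_semiconj funpow_in_topspace[OF continuous_T] by (auto simp: topspace_fence_topology)
  moreover have "inj_on T {p \<in> F. fst p = (H ^^ n) x}"
    using inj_on_fibres[OF funpow_in_topspace[OF continuous_H Suc.prems]] by (simp only: fence_fibre_eq)
  ultimately have "inj_on T ((T ^^ n) ` {p \<in> F. fst p = x})"
    by (rule inj_on_subset[rotated])
  then show ?case
    using comp_inj_on[OF Suc.IH[OF Suc.prems]] by (simp add: comp_def)
qed simp

lemma continuous_map_snd_fence: "continuous_map Y euclideanreal snd"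
  unfolding fence_topology_def by (rule continuous_map_from_subtopology[OF continuous_map_snd])

lemma fibre_map_monotone:
  assumes x: "x \<in> topspace X"
  shows "mono_on {phiL x..phiU x} (\<lambda>t. snd ((T ^^ n) (x, t)))
       \<or> antimono_on {phiL x..phiU x} (\<lambda>t. snd ((T ^^ n) (x, t)))"
proof (rule continuous_inj_on_interval_monotone)
  let ?I = "{phiL x..phiU x}"
  have "continuous_map (top_of_set ?I) (prod_topology X euclideanreal) (\<lambda>t. (x, t))"
    using x by (intro continuous_map_pairedI) (auto simp: continuous_map_from_subtopology)
  moreover have "(\<lambda>t. (x, t)) \<in> topspace (top_of_set ?I) \<rightarrow> F"
    using x by (auto simp: mem_fence)
  ultimately have "continuous_map (top_of_set ?I) Y (\<lambda>t. (x, t))"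
    unfolding fence_topology_def by (rule continuous_map_into_subtopology)
  then have "continuous_map (top_of_set ?I) euclideanreal (snd \<circ> (T ^^ n) \<circ> (\<lambda>t. (x, t)))"
    using continuous_map_compose[OF continuous_map_funpow[OF continuous_T] continuous_map_snd_fence]
    by (rule continuous_map_compose)
  then show "continuous_on ?I (\<lambda>t. snd ((T ^^ n) (x, t)))"
    by (simp add: o_def)
  show "inj_on (\<lambda>t. snd ((T ^^ n) (x, t))) ?I"
  proof (rule inj_onI)
    fix s t assume "s \<in> ?I" "t \<in> ?I" and snd_eq: "snd ((T ^^ n) (x, s)) = snd ((T ^^ n) (x, t))"
    then have "(x, s) \<in> {p \<in> F. fst p = x}" "(x, t) \<in> {p \<in> F. fst p = x}"
      using x by (simp_all add: mem_fence)
    moreover have "(T ^^ n) (x, s) = (T ^^ n) (x, t)"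
      using calculation funpow_semiconj[of "(x, s)" n] funpow_semiconj[of "(x, t)" n] snd_eq
      by (simp add: topspace_fence_topology prod_eq_iff)
    ultimately show "s = t"
      using inj_on_funpow_fibre[OF x, of n] by (auto dest: inj_onD)
  qed
qed

lemma fibre_codes_card_le:
  fixes m :: nat and \<delta> :: real
  assumes x: "x \<in> topspace X" and "\<delta> > 0"
  defines "code \<equiv> \<lambda>t. \<lambda>i\<in>{..<m}. \<lfloor>snd ((T ^^ i) (x, t)) / \<delta>\<rfloor>"
  shows "finite (code ` {phiL x..phiU x})" and "card (code ` {phiL x..phiU x}) \<le> m * nat \<lceil>1 / \<delta>\<rceil> + 1"
proof -
  let ?I = "{phiL x..phiU x}"
  have range: "\<lfloor>snd ((T ^^ i) (x, t)) / \<delta>\<rfloor> \<in> {0..int (nat \<lceil>1 / \<delta>\<rceil>)}" if "t \<in> ?I" for i t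
  proof -
    have "(x, t) \<in> topspace Y"
      using x that by (simp add: topspace_fence_topology mem_fence)
    then have "(T ^^ i) (x, t) \<in> topspace X \<times> {0..1}"
      using funpow_in_topspace[OF continuous_T] fence_subset topspace_fence_topology by blast
    then show ?thesis
      using \<open>\<delta> > 0\<close> by (intro floor_divide_mem_range) (simp_all add: mem_Times_iff)
  qed
  have "mono_on ?I (\<lambda>t. \<lfloor>snd ((T ^^ i) (x, t)) / \<delta>\<rfloor>) \<or> antimono_on ?I (\<lambda>t. \<lfloor>snd ((T ^^ i) (x, t)) / \<delta>\<rfloor>)"
    for i
    using fibre_map_monotone[OF x, of i] \<open>\<delta> > 0\<close> unfolding monotone_on_def
    by (metis divide_right_mono floor_mono less_le)
  with range show "card (code ` ?I) \<le> m * nat \<lceil>1 / \<delta>\<rceil> + 1"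
    unfolding code_def by (intro card_mono_or_antimono_codes_le)
  show "finite (code ` ?I)"
    unfolding code_def using range by (rule finite_bounded_codes)
qed

lemma fibre_tracking_family:
  assumes x: "x \<in> topspace X" and "\<delta> > 0"
    and lebesgue: "\<And>p. p \<in> F \<Longrightarrow> \<exists>A\<in>W. \<forall>q\<in>F. fst q = fst p \<and> dist (snd q) (snd p) < \<delta> \<longrightarrow> q \<in> A"
  obtains S where "finite S" "card S \<le> m * nat \<lceil>1 / \<delta>\<rceil> + 1" "\<And>A i. A \<in> S \<Longrightarrow> i < m \<Longrightarrow> A i \<in> W"
    "\<And>y. y \<in> F \<Longrightarrow> fst y = x \<Longrightarrow> \<exists>A\<in>S. \<forall>i<m. (T ^^ i) y \<in> A i"
proof -
  have "\<forall>p\<in>F. \<exists>A. A \<in> W \<and> (\<forall>q\<in>F. fst q = fst p \<and> dist (snd q) (snd p) < \<delta> \<longrightarrow> q \<in> A)"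
    using lebesgue by blast
  then obtain B where B: "\<forall>p\<in>F. B p \<in> W \<and> (\<forall>q\<in>F. fst q = fst p \<and> dist (snd q) (snd p) < \<delta> \<longrightarrow> q \<in> B p)"
    by (rule bchoice[THEN exE])
  define I where "I = {phiL x..phiU x}"
  define code where "code t = (\<lambda>i\<in>{..<m}. \<lfloor>snd ((T ^^ i) (x, t)) / \<delta>\<rfloor>)" for t
  have codes: "finite (code ` I)" "card (code ` I) \<le> m * nat \<lceil>1 / \<delta>\<rceil> + 1"
    unfolding code_def I_def using fibre_codes_card_le[OF x \<open>\<delta> > 0\<close>] by blast+
  have orbit_in_F: "(T ^^ i) (x, t) \<in> F" and orbit_fst: "fst ((T ^^ i) (x, t)) = (H ^^ i) x"
    if "t \<in> I" for i t
  proof -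
    have "(x, t) \<in> topspace Y"
      using x that unfolding I_def by (simp add: topspace_fence_topology mem_fence)
    then show "(T ^^ i) (x, t) \<in> F" and "fst ((T ^^ i) (x, t)) = (H ^^ i) x"
      using funpow_in_topspace[OF continuous_T] funpow_semiconj by (simp_all add: topspace_fence_topology)
  qed
  \<comment> \<open>Points of the fibre with equal codes have \<delta>-close iterates over the same base points,
     so the Lebesgue set chosen for a representative of the code serves all of them.\<close>
  define S where "S = (\<lambda>c i. B ((T ^^ i) (x, inv_into I code c))) ` code ` I"
  show thesis
  proof (rule that[of S])
    show "finite S"
      unfolding S_def using codes(1) by blast
    show "card S \<le> m * nat \<lceil>1 / \<delta>\<rceil> + 1"
      unfolding S_def using card_image_le[OF codes(1)] codes(2) by (rule le_trans)
  next
    fix A i assume "A \<in> S" "i < m"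
    then obtain t where "t \<in> I" "A = (\<lambda>i. B ((T ^^ i) (x, inv_into I code (code t))))"
      unfolding S_def by blast
    then show "A i \<in> W"
      using B orbit_in_F inv_into_into[of "code t" code I] by auto
  next
    fix y assume "y \<in> F" "fst y = x"
    then obtain t where y: "y = (x, t)" and "t \<in> I"
      unfolding I_def by (cases y) (auto simp: mem_fence)
    define s where "s = inv_into I code (code t)"
    have "s \<in> I" and "code s = code t"
      unfolding s_def using \<open>t \<in> I\<close> by (simp_all add: inv_into_into f_inv_into_f)
    have "(T ^^ i) (x, t) \<in> B ((T ^^ i) (x, s))" if "i < m" for i
    proof -
      have "\<lfloor>snd ((T ^^ i) (x, t)) / \<delta>\<rfloor> = \<lfloor>snd ((T ^^ i) (x, s)) / \<delta>\<rfloor>"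
        using fun_cong[OF \<open>code s = code t\<close>, of i] that unfolding code_def by simp
      then have "dist (snd ((T ^^ i) (x, t))) (snd ((T ^^ i) (x, s))) < \<delta>"
        using \<open>\<delta> > 0\<close> by (rule dist_less_of_floor_divide_eq[rotated])
      moreover have "fst ((T ^^ i) (x, t)) = fst ((T ^^ i) (x, s))"
        using orbit_fst \<open>s \<in> I\<close> \<open>t \<in> I\<close> by simp
      ultimately show ?thesis
        using B orbit_in_F[OF \<open>s \<in> I\<close>] orbit_in_F[OF \<open>t \<in> I\<close>] by blast
    qed
    then have "\<forall>i<m. (T ^^ i) y \<in> B ((T ^^ i) (x, s))"
      unfolding y by simp
    moreover have "(\<lambda>i. B ((T ^^ i) (x, s))) \<in> S"
      unfolding S_def s_def using \<open>t \<in> I\<close> by (intro imageI)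
    ultimately show "\<exists>A\<in>S. \<forall>i<m. (T ^^ i) y \<in> A i"
      by (rule bexI[of _ "\<lambda>i. B ((T ^^ i) (x, s))"])
  qed
qed

lemma fence_tracking_cover:
  assumes W: "open_cover Y W" and "\<delta> > 0"
    and lebesgue: "\<And>p. p \<in> F \<Longrightarrow> \<exists>A\<in>W. \<forall>q\<in>F. fst q = fst p \<and> dist (snd q) (snd p) < \<delta> \<longrightarrow> q \<in> A"
  shows "open_cover X {V. openin X V \<and> (\<exists>S. finite S \<and> card S \<le> m * nat \<lceil>1 / \<delta>\<rceil> + 1 \<and>
             (\<forall>A\<in>S. \<forall>i<m. A i \<in> W) \<and> (\<forall>y\<in>topspace Y. fst y \<in> V \<longrightarrow> (\<exists>A\<in>S. \<forall>i<m. (T ^^ i) y \<in> A i)))}"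
    (is "open_cover X ?U")
  unfolding open_cover_def
proof (intro conjI ballI subsetI)
  fix V assume "V \<in> ?U"
  then show "openin X V"
    by blast
next
  fix x assume x: "x \<in> topspace X"
  obtain S where S: "finite S" "card S \<le> m * nat \<lceil>1 / \<delta>\<rceil> + 1" "\<And>A i. A \<in> S \<Longrightarrow> i < m \<Longrightarrow> A i \<in> W"
    "\<And>y. y \<in> F \<Longrightarrow> fst y = x \<Longrightarrow> \<exists>A\<in>S. \<forall>i<m. (T ^^ i) y \<in> A i"
    using fibre_tracking_family[OF x \<open>\<delta> > 0\<close> lebesgue, where m = m] by blast
  have "\<And>A i. A \<in> S \<Longrightarrow> i < m \<Longrightarrow> openin Y (A i)"
    using S(3) W unfolding open_cover_def by blast
  then obtain V where V: "openin X V" "x \<in> V"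
    "\<And>y. y \<in> topspace Y \<Longrightarrow> fst y \<in> V \<Longrightarrow> \<exists>A\<in>S. \<forall>i<m. (T ^^ i) y \<in> A i"
    using tracking_family_neighbourhood[OF compact_space_fence_topology Hausdorff x] S(4)
    unfolding topspace_fence_topology by blast
  then have "V \<in> ?U"
    using S(1-3) by blast
  with \<open>x \<in> V\<close> show "x \<in> \<Union>?U"
    by blast
qed

lemma topological_entropy_fence_le: "topological_entropy Y T \<le> topological_entropy X H"
  unfolding topological_entropy_def[of Y]
proof (rule SUP_least, unfold mem_Collect_eq)
  fix W assume W: "open_cover Y W"
  then have W_open: "\<And>A. A \<in> W \<Longrightarrow> openin (subtopology (prod_topology X euclideanreal) F) A"
    and W_cover: "F \<subseteq> \<Union>W"
    unfolding open_cover_def fence_topology_def[symmetric] topspace_fence_topology by blast+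
  obtain \<delta> where "\<delta> > 0" and lebesgue:
    "\<And>p. p \<in> F \<Longrightarrow> \<exists>A\<in>W. \<forall>q\<in>F. fst q = fst p \<and> dist (snd q) (snd p) < \<delta> \<longrightarrow> q \<in> A"
    using vertical_lebesgue_number[OF compactin_fence W_open W_cover] by blast
  define K where "K = nat \<lceil>1 / \<delta>\<rceil>"
  have "cover_entropy Y T W \<le> topological_entropy X H + ereal (ln (real (m * K + 1)) / real m)"
    if "m > 0" for m
    using compact fence_tracking_cover[OF W \<open>\<delta> > 0\<close> lebesgue, of m] that
    unfolding K_def by (rule cover_entropy_le_block_bound) auto
  moreover have "(\<lambda>m. ln (real (m * K + 1)) / real m) \<longlonglongrightarrow> 0"
  proof -
    have "real K > 0"
      using \<open>\<delta> > 0\<close> unfolding K_def by simp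
    then have "(\<lambda>m. ln (real m * real K + 1) / real m) \<longlonglongrightarrow> 0"
      by real_asymp
    then show ?thesis
      by (simp add: add.commute)
  qed
  ultimately show "cover_entropy Y T W \<le> topological_entropy X H"
    by (rule ereal_le_of_le_add_vanishing)
qed

lemma topological_entropy_fence_ge: "topological_entropy X H \<le> topological_entropy Y T"
  using compact_space_fence_topology
  by (rule topological_entropy_le_of_surjective) (simp add: topspace_fence_topology fst_fence_image)

end

lemma compact_space_cantor_space: "compact_space cantor_space"
  unfolding cantor_space_def
  by (simp add: compact_space_product_topology compact_space_discrete_topology)

lemma Hausdorff_space_cantor_space: "Hausdorff_space cantor_space"
  unfolding cantor_space_def by (simp add: Hausdorff_space_product_topology)

lemma embedding_map_imp_inj_on: "embedding_map X Y f \<Longrightarrow> inj_on f (topspace X)"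
  unfolding embedding_map_def by (rule homeomorphic_imp_injective_map)

theorem proposition3p2:
  fixes X :: "'a topology"
    and phiL phiU :: "'a \<Rightarrow> real"
    and H :: "'a \<Rightarrow> 'a"
    and T :: "'a \<times> real \<Rightarrow> 'a \<times> real"
  assumes "X homeomorphic_space cantor_space"
    and "is_fence_data X phiL phiU"
    and "continuous_map X X H"
    and "H ` topspace X = topspace X"
    and "T \<in> fence X phiL phiU \<rightarrow> fence X phiL phiU"
    and "continuous_map (fence_topology X phiL phiU) (fence_topology X phiL phiU) T"
    and "is_lifting X phiL phiU H T"
    and "\<And>x. x \<in> topspace X \<Longrightarrow>
           embedding_map (subtopology (fence_topology X phiL phiU) ({x} \<times> fence_fiber X phiL phiU x))
                         (fence_topology X phiL phiU) T"
  shows "topological_entropy (fence_topology X phiL phiU) T = topological_entropy X H"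
proof -
  have "compact_space X"
    using homeomorphic_compact_space[OF assms(1)] compact_space_cantor_space by blast
  moreover have "Hausdorff_space X"
    using homeomorphic_Hausdorff_space[OF assms(1)] Hausdorff_space_cantor_space by blast
  moreover have "inj_on T ({x} \<times> fence_fiber X phiL phiU x)" if "x \<in> topspace X" for x
  proof -
    have "topspace (subtopology (fence_topology X phiL phiU) ({x} \<times> fence_fiber X phiL phiU x))
        = {x} \<times> fence_fiber X phiL phiU x"
      by (auto simp: fence_fiber_def fence_topology_def fence_def)
    then show ?thesis
      using embedding_map_imp_inj_on[OF assms(8)[OF that]] by simp
  qed
  ultimately interpret fence_lifting X phiL phiU H T
    using assms(2,3,6,7) by unfold_locales
  show ?thesis
    using topological_entropy_fence_le topological_entropy_fence_ge by (rule antisym)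
qed
end
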